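(* Let a group $\Gamma$ act on a set $X$, and let $\mathcal S$ be a nonempty self-dual, nested, chain-vanishing collection of nonempty subsets of $X$ which is invariant under the induced action of $\Gamma$ on subsets of $X$. Then $\gamma\cdot[A]_{\mathcal S}:=[\gamma A]_{\mathcal S}$ is a well-defined action of $\Gamma$ by automorphisms on the tree $\mathcal T_{\mathcal S}$ (whose vertex set has cardinality at most $|\mathcal S|$), and the set of stabilizers of the directed edges of $\mathcal T_{\mathcal S}$ is exactly $\{\operatorname{Stab}_\Gamma(A): A\in\mathcal S\}$, where $\operatorname{Stab}_\Gamma(A)$ is the setwise stabilizer. Moreover, if for every $A\in\mathcal S$ there is $\gamma\in\Gamma$ with $\gamma A\ne A$ and $\gamma A\cap A\neq\emptyset$, then no vertex of $\mathcal T_{\mathcal S}$ is fixed by all of $\Gamma$.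
   Context: Fix a nonempty set $X$; $A^c:=X\setminus A$, $A^1:=A$, $A^{-1}:=A^c$. $A\perp B$ means $A\cap B=\emptyset$ and $A\ne B^c$. For a collection $\mathcal S$ of nonempty subsets of $X$ and $A,B\in\mathcal S$, $B$ is $\mathcal S$-maximally orthogonal to $A$ if $B\perp A$ and no $C\in\mathcal S$ satisfies $C\perp A$, $C\supsetneq B$; $[A]_{\mathcal S}:=\{A\}\cup\{B\in\mathcal S:B$ is $\mathcal S$-maximally orthogonal to $A\}$; $A\sim_{\mathcal S}B$ iff $A\in[B]_{\mathcal S}$ (an equivalence relation under the hypotheses). A chain is a strictly monotone (under inclusion) sequence $(A_n)_{n\in\mathbb N}$; a decreasing (resp. increasing) chain is $\mathcal S$-vanishing if no $B\in\mathcal S$ satisfies $B\subseteq A_n$ (resp. $B\cap A_n=\emptyset$) for all $n$; $\mathcal S$ is chain-vanishing if all chains in $\mathcal S$ are $\mathcal S$-vanishing. $A,B$ are nested if some $A^i\cap B^j$ is empty; $\mathcal S$ is nested if its members are pairwise nested; self-dual if closed under complements. $\mathcal T_{\mathcal S}$ is the graph on $\mathcal S/{\sim_{\mathcal S}}$ with an edge between $[A]_{\mathcal S}$ and $[A^c]_{\mathcal S}$ for every $A$ with $A,A^c\in\mathcal S$; its directed edges are $([A]_{\mathcal S},[A^c]_{\mathcal S})$, $A\in\mathcal S$. *)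

theory Defs
  imports "HOL-Algebra.Group_Action"
begin

definition orth :: "'a set \<Rightarrow> 'a set \<Rightarrow> 'a set \<Rightarrow> bool" where
  "orth X A B \<longleftrightarrow> A \<inter> B = {} \<and> A \<noteq> X - B"

definition max_orth :: "'a set \<Rightarrow> 'a set set \<Rightarrow> 'a set \<Rightarrow> 'a set \<Rightarrow> bool" where
  "max_orth X S A B \<longleftrightarrow> B \<in> S \<and> orth X B A \<and> \<not> (\<exists>C\<in>S. orth X C A \<and> B \<subset> C)"

definition cls :: "'a set \<Rightarrow> 'a set set \<Rightarrow> 'a set \<Rightarrow> 'a set set" where
  "cls X S A = {A} \<union> {B \<in> S. max_orth X S A B}"

definition Vert :: "'a set \<Rightarrow> 'a set set \<Rightarrow> 'a set set set" where
  "Vert X S = cls X S ` S"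

definition self_dual :: "'a set \<Rightarrow> 'a set set \<Rightarrow> bool" where
  "self_dual X S \<longleftrightarrow> (\<forall>A\<in>S. X - A \<in> S)"

definition nested :: "'a set \<Rightarrow> 'a set set \<Rightarrow> bool" where
  "nested X S \<longleftrightarrow> (\<forall>A\<in>S. \<forall>B\<in>S.
      A \<inter> B = {} \<or> A \<inter> (X - B) = {} \<or> (X - A) \<inter> B = {} \<or> (X - A) \<inter> (X - B) = {})"

definition incr_chain :: "(nat \<Rightarrow> 'a set) \<Rightarrow> bool" where
  "incr_chain F \<longleftrightarrow> (\<forall>n. F n \<subset> F (Suc n))"

definition decr_chain :: "(nat \<Rightarrow> 'a set) \<Rightarrow> bool" where
  "decr_chain F \<longleftrightarrow> (\<forall>n. F (Suc n) \<subset> F n)"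

definition chain_vanishing :: "'a set set \<Rightarrow> bool" where
  "chain_vanishing S \<longleftrightarrow>
     (\<forall>F. range F \<subseteq> S \<longrightarrow>
        (decr_chain F \<longrightarrow> \<not> (\<exists>B\<in>S. \<forall>n. B \<subseteq> F n)) \<and>
        (incr_chain F \<longrightarrow> \<not> (\<exists>B\<in>S. \<forall>n. B \<inter> F n = {})))"

text \<open>Trees in the sense of Serre: a graph with vertex set V, directed edge set E,
  origin o, terminus t and reversal r.\<close>
definition is_path :: "'e set \<Rightarrow> ('e \<Rightarrow> 'v) \<Rightarrow> ('e \<Rightarrow> 'v) \<Rightarrow> 'e list \<Rightarrow> 'v \<Rightarrow> 'v \<Rightarrow> bool" where
  "is_path E o' t es v w \<longleftrightarrow> es \<noteq> [] \<and> set es \<subseteq> E \<and> o' (hd es) = v \<and> t (last es) = w \<and>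
     (\<forall>i. Suc i < length es \<longrightarrow> t (es ! i) = o' (es ! Suc i))"

definition reduced_path :: "('e \<Rightarrow> 'e) \<Rightarrow> 'e list \<Rightarrow> bool" where
  "reduced_path r es \<longleftrightarrow> (\<forall>i. Suc i < length es \<longrightarrow> es ! Suc i \<noteq> r (es ! i))"

definition serre_tree :: "'v set \<Rightarrow> 'e set \<Rightarrow> ('e \<Rightarrow> 'v) \<Rightarrow> ('e \<Rightarrow> 'v) \<Rightarrow> ('e \<Rightarrow> 'e) \<Rightarrow> bool" where
  "serre_tree V E o' t r \<longleftrightarrow>
     V \<noteq> {} \<and>
     (\<forall>e\<in>E. o' e \<in> V \<and> t e \<in> V \<and> r e \<in> E \<and> r e \<noteq> e \<and> r (r e) = e \<and> o' (r e) = t e) \<and>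
     (\<forall>v\<in>V. \<forall>w\<in>V. v = w \<or> (\<exists>es. is_path E o' t es v w)) \<and>
     \<not> (\<exists>es v. is_path E o' t es v v \<and> reduced_path r es)"

text \<open>The graph T_S: vertices [A]_S, directed edges indexed by A \<in> S, going from
  [A]_S to [X - A]_S, with reversal A \<mapsto> X - A.\<close>
abbreviation T_tree :: "'a set \<Rightarrow> 'a set set \<Rightarrow> bool" where
  "T_tree X S \<equiv> serre_tree (Vert X S) S (cls X S) (\<lambda>A. cls X S (X - A)) (\<lambda>A. X - A)"

definition sact :: "('g \<Rightarrow> 'a \<Rightarrow> 'a) \<Rightarrow> 'g \<Rightarrow> 'a set \<Rightarrow> 'a set" where
  "sact \<phi> g A = \<phi> g ` A"

definition vact :: "('g \<Rightarrow> 'a \<Rightarrow> 'a) \<Rightarrow> 'g \<Rightarrow> 'a set set \<Rightarrow> 'a set set" where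
  "vact \<phi> g v = sact \<phi> g ` v"

definition set_stab :: "('g, 'm) monoid_scheme \<Rightarrow> ('g \<Rightarrow> 'a \<Rightarrow> 'a) \<Rightarrow> 'a set \<Rightarrow> 'g set" where
  "set_stab G \<phi> A = {g \<in> carrier G. sact \<phi> g A = A}"

definition edge_stab :: "('g, 'm) monoid_scheme \<Rightarrow> ('g \<Rightarrow> 'a \<Rightarrow> 'a) \<Rightarrow> 'a set \<Rightarrow> 'a set set \<Rightarrow> 'a set \<Rightarrow> 'g set" where
  "edge_stab G \<phi> X S A = {g \<in> carrier G. vact \<phi> g (cls X S A) = cls X S A \<and>
                                          vact \<phi> g (cls X S (X - A)) = cls X S (X - A)}"

end

theory Submission imports Defs begin

text \<open>Maximal orthogonality is symmetric and, by nestedness, transitive, so the classes [A]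
  partition S. Chain-vanishing supplies covers: if D is a minimal member of S strictly containing A,
  then X - D is maximally orthogonal to A, so the edge X - D joins [A] to [D]; climbing through
  covers, which terminates by chain-vanishing again, connects any two vertices. Along a reduced
  path the edges strictly decrease as sets, so a closed reduced path would have its last edge
  inside its first one, while closing up the path forces the reverse strict inclusion.
  A bijection of X preserving S preserves maximal orthogonality, so the group acts on the tree.
  An edge is determined by its two endpoints, whence edge stabilisers are setwise stabilisers;
  and distinct members of a class are disjoint, so a vertex [A] fixed by the whole group forces
  gA and A to be disjoint whenever gA differs from A.\<close>

lemma is_path_append:
  assumes "is_path E o' t xs u v" and "is_path E o' t ys v w"
  shows "is_path E o' t (xs @ ys) u w"
proof -
  have xs: "xs \<noteq> []" "\<forall>i. Suc i < length xs \<longrightarrow> t (xs ! i) = o' (xs ! Suc i)"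
    and ys: "ys \<noteq> []" "\<forall>i. Suc i < length ys \<longrightarrow> t (ys ! i) = o' (ys ! Suc i)"
    and junction: "t (last xs) = o' (hd ys)"
    using assms unfolding is_path_def by auto
  have "t ((xs @ ys) ! i) = o' ((xs @ ys) ! Suc i)" if i: "Suc i < length (xs @ ys)" for i
  proof -
    consider "Suc i < length xs" | "Suc i = length xs" | "length xs \<le> i" by linarith
    then show ?thesis
    proof cases
      case 1
      then show ?thesis using xs by (simp add: nth_append)
    next
      case 2
      then have "i = length xs - 1" by simp
      then show ?thesis using xs ys junction by (simp add: nth_append last_conv_nth hd_conv_nth)
    next
      case 3
      then show ?thesis using i ys by (simp add: nth_append Suc_diff_le)
    qed
  qed
  then show ?thesis using assms unfolding is_path_def by auto
qed

definition edge_rel :: "'e set \<Rightarrow> ('e \<Rightarrow> 'v) \<Rightarrow> ('e \<Rightarrow> 'v) \<Rightarrow> 'v \<Rightarrow> 'v \<Rightarrow> bool" where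
  "edge_rel E o' t v w \<longleftrightarrow> (\<exists>e\<in>E. o' e = v \<and> t e = w)"

lemma is_path_if_rtranclp_edge_rel:
  assumes "(edge_rel E o' t)\<^sup>*\<^sup>* v w"
  shows "v = w \<or> (\<exists>es. is_path E o' t es v w)"
  using assms
proof (induction rule: rtranclp_induct)
  case (step u w)
  then obtain e where e: "e \<in> E" "o' e = u" "t e = w" unfolding edge_rel_def by blast
  then have "is_path E o' t [e] u w" unfolding is_path_def by simp
  with step.IH show ?case using is_path_append by metis
qed simp

locale nested_family =
  fixes X :: "'a set" and S :: "'a set set"
  assumes members_nonempty_subset: "\<forall>A\<in>S. A \<noteq> {} \<and> A \<subseteq> X"
    and self_dual: "self_dual X S"
    and nested: "nested X S"
    and chain_vanishing: "chain_vanishing S"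
begin

lemma mem_subset: "A \<in> S \<Longrightarrow> A \<subseteq> X"
  using members_nonempty_subset by blast

lemma mem_nonempty: "A \<in> S \<Longrightarrow> A \<noteq> {}"
  using members_nonempty_subset by blast

lemma compl_mem: "A \<in> S \<Longrightarrow> X - A \<in> S"
  using self_dual unfolding self_dual_def by blast

lemma double_compl [simp]: "A \<in> S \<Longrightarrow> X - (X - A) = A"
  using mem_subset by blast

lemma nestedD:
  "A \<in> S \<Longrightarrow> B \<in> S \<Longrightarrow>
     A \<inter> B = {} \<or> A \<inter> (X - B) = {} \<or> (X - A) \<inter> B = {} \<or> (X - A) \<inter> (X - B) = {}"
  using nested unfolding nested_def by blast

lemma orth_iff_psubset_compl: "A \<in> S \<Longrightarrow> B \<in> S \<Longrightarrow> orth X B A \<longleftrightarrow> B \<subset> X - A"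
  using mem_subset[of A] mem_subset[of B] unfolding orth_def by blast

lemma max_orth_iff:
  assumes "A \<in> S"
  shows "max_orth X S A B \<longleftrightarrow> B \<in> S \<and> B \<subset> X - A \<and> \<not> (\<exists>C\<in>S. C \<subset> X - A \<and> B \<subset> C)"
  unfolding max_orth_def by (simp add: orth_iff_psubset_compl[OF assms] cong: conj_cong)

lemma max_orth_sym:
  assumes "max_orth X S A B" and A: "A \<in> S"
  shows "max_orth X S B A"
proof -
  have B: "B \<in> S" and BA: "B \<subset> X - A"
    and B_max: "\<And>C. C \<in> S \<Longrightarrow> C \<subset> X - A \<Longrightarrow> \<not> B \<subset> C"
    using assms(1) unfolding max_orth_iff[OF A] by blast+
  have "A \<subset> X - B" using BA mem_subset[OF A] by blast
  moreover have "\<not> A \<subset> C" if C: "C \<in> S" "C \<subset> X - B" for C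
  proof
    assume "A \<subset> C"
    then have "X - C \<subset> X - A" and "B \<subset> X - C"
      using C mem_subset[OF A] mem_subset[OF B] mem_subset[OF C(1)] by blast+
    then show False using B_max compl_mem[OF C(1)] by blast
  qed
  ultimately show ?thesis unfolding max_orth_iff[OF B] using A by blast
qed

lemma max_orth_trans:
  assumes BA: "max_orth X S B A" and BD: "max_orth X S B D" and B: "B \<in> S" and "A \<noteq> D"
  shows "max_orth X S A D"
proof -
  have A: "A \<in> S" and "A \<subset> X - B" and A_max: "\<And>C. C \<in> S \<Longrightarrow> C \<subset> X - B \<Longrightarrow> \<not> A \<subset> C"
    using BA unfolding max_orth_iff[OF B] by blast+
  have D: "D \<in> S" and "D \<subset> X - B" and D_max: "\<And>C. C \<in> S \<Longrightarrow> C \<subset> X - B \<Longrightarrow> \<not> D \<subset> C"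
    using BD unfolding max_orth_iff[OF B] by blast+
  have X: "A \<subseteq> X" "B \<subseteq> X" "D \<subseteq> X" using A B D mem_subset by auto
  obtain a b d where a: "a \<in> X - B" "a \<in> A" and b: "b \<in> X - A" "b \<in> X - D" and d: "d \<in> D" "d \<notin> B"
    using mem_nonempty[OF A] mem_nonempty[OF B] mem_nonempty[OF D]
      \<open>A \<subset> X - B\<close> \<open>D \<subset> X - B\<close> X by blast
  have "D \<subset> X - A"
    using nestedD[OF A D]
  proof (elim disjE)
    assume "A \<inter> D = {}"
    then show ?thesis using b X by blast
  next
    assume "A \<inter> (X - D) = {}"
    then have "A \<subset> D" using X \<open>A \<noteq> D\<close> by blast
    then show ?thesis using A_max[OF D \<open>D \<subset> X - B\<close>] by simp
  next
    assume "(X - A) \<inter> D = {}"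
    then have "D \<subset> A" using X \<open>A \<noteq> D\<close> by blast
    then show ?thesis using D_max[OF A \<open>A \<subset> X - B\<close>] by simp
  next
    assume "(X - A) \<inter> (X - D) = {}"
    then show ?thesis using b by blast
  qed
  moreover have "\<not> D \<subset> C" if C: "C \<in> S" "C \<subset> X - A" for C
  proof
    assume "D \<subset> C"
    have CX: "C \<subseteq> X" using mem_subset[OF C(1)] .
    show False
      using nestedD[OF C(1) B]
    proof (elim disjE)
      assume "C \<inter> B = {}"
      then have "C \<subset> X - B" using CX a C(2) by blast
      then show False using D_max[OF C(1)] \<open>D \<subset> C\<close> by simp
    next
      assume "C \<inter> (X - B) = {}"
      then show False using d \<open>D \<subset> C\<close> CX by blast
    next
      assume "(X - C) \<inter> B = {}"
      then have "A \<subset> X - C" and "X - C \<subset> X - B"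
        using C X CX d \<open>D \<subset> C\<close> by blast+
      then show False using A_max[OF compl_mem[OF C(1)]] by simp
    next
      assume "(X - C) \<inter> (X - B) = {}"
      then show False using a C(2) by blast
    qed
  qed
  ultimately show ?thesis unfolding max_orth_iff[OF A] using D by blast
qed

lemma cls_subset_if_max_orth:
  assumes AB: "max_orth X S A B" and A: "A \<in> S"
  shows "cls X S B \<subseteq> cls X S A"
proof
  fix D assume "D \<in> cls X S B"
  then consider "D = B" | "max_orth X S B D" unfolding cls_def by blast
  then show "D \<in> cls X S A"
  proof cases
    case 1
    then show ?thesis using AB unfolding cls_def max_orth_def by simp
  next
    case 2
    have "B \<in> S" using AB unfolding max_orth_def by simp
    then have "D = A \<or> max_orth X S A D"
      using max_orth_trans[OF max_orth_sym[OF AB A] 2] by blast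
    then show ?thesis using 2 unfolding cls_def max_orth_def by auto
  qed
qed

lemma cls_eq_if_mem:
  assumes "B \<in> cls X S A" and A: "A \<in> S"
  shows "cls X S A = cls X S B"
proof (cases "B = A")
  case False
  then have AB: "max_orth X S A B" using assms(1) unfolding cls_def by auto
  then have "B \<in> S" unfolding max_orth_def by simp
  then show ?thesis
    using cls_subset_if_max_orth[OF AB A] cls_subset_if_max_orth[OF max_orth_sym[OF AB A]] by blast
qed simp

lemma psubset_if_cls_compl_eq:
  assumes A: "A \<in> S" and "cls X S (X - A) = cls X S B" and "B \<noteq> X - A"
  shows "B \<subset> A"
proof -
  have "max_orth X S (X - A) B" using assms(2,3) unfolding cls_def by auto
  then show ?thesis unfolding max_orth_iff[OF compl_mem[OF A]] using A by simp
qed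

lemma cls_eq_cls_compl_if_cover:
  assumes A: "A \<in> S" and D: "D \<in> S" and "A \<subset> D"
    and cover: "\<And>E. E \<in> S \<Longrightarrow> A \<subset> E \<Longrightarrow> \<not> E \<subset> D"
  shows "cls X S A = cls X S (X - D)"
proof -
  have "X - D \<subset> X - A" using \<open>A \<subset> D\<close> mem_subset[OF D] by blast
  moreover have "\<not> X - D \<subset> C" if C: "C \<in> S" "C \<subset> X - A" for C
  proof
    assume "X - D \<subset> C"
    then have "A \<subset> X - C" and "X - C \<subset> D"
      using C mem_subset[OF A] mem_subset[OF D] mem_subset[OF C(1)] by blast+
    then show False using cover[OF compl_mem[OF C(1)]] by blast
  qed
  ultimately have "max_orth X S A (X - D)" unfolding max_orth_iff[OF A] using compl_mem[OF D] by blast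
  then have "X - D \<in> cls X S A" unfolding cls_def using compl_mem[OF D] by blast
  then show ?thesis by (rule cls_eq_if_mem[OF _ A])
qed

lemma wf_psubset_above:
  assumes B: "B \<in> S"
  shows "wf {(E', E). E \<in> S \<and> E' \<in> S \<and> B \<subseteq> E' \<and> E' \<subset> E}"
proof (rule ccontr)
  assume "\<not> ?thesis"
  then obtain F where "\<forall>i. (F (Suc i), F i) \<in> {(E', E). E \<in> S \<and> E' \<in> S \<and> B \<subseteq> E' \<and> E' \<subset> E}"
    unfolding wf_iff_no_infinite_down_chain by blast
  then have F: "F i \<in> S \<and> B \<subseteq> F (Suc i) \<and> F (Suc i) \<subset> F i" for i by blast
  then have "decr_chain F" and "range F \<subseteq> S" unfolding decr_chain_def by auto
  moreover have "B \<subseteq> F n" for n using F[of n] F[of 0] by (cases n) auto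
  ultimately show False using chain_vanishing B unfolding chain_vanishing_def by blast
qed

lemma wf_psupset_below:
  assumes C: "C \<in> S"
  shows "wf {(E', E). E \<in> S \<and> E' \<in> S \<and> E \<subset> E' \<and> E' \<subseteq> C}"
proof (rule ccontr)
  assume "\<not> ?thesis"
  then obtain F where "\<forall>i. (F (Suc i), F i) \<in> {(E', E). E \<in> S \<and> E' \<in> S \<and> E \<subset> E' \<and> E' \<subseteq> C}"
    unfolding wf_iff_no_infinite_down_chain by blast
  then have F: "F i \<in> S \<and> F i \<subset> F (Suc i) \<and> F (Suc i) \<subseteq> C" for i by blast
  then have "incr_chain F" and "range F \<subseteq> S" unfolding incr_chain_def by auto
  moreover have "(X - C) \<inter> F n = {}" for n using F[of n] F[of 0] by (cases n) auto
  ultimately show False using chain_vanishing compl_mem[OF C] unfolding chain_vanishing_def by blast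
qed

lemma obtain_cover_below:
  assumes A: "A \<in> S" and C: "C \<in> S" and "A \<subset> C"
  obtains D where "D \<in> S" "A \<subset> D" "D \<subseteq> C" "\<And>E. E \<in> S \<Longrightarrow> A \<subset> E \<Longrightarrow> \<not> E \<subset> D"
proof -
  have "C \<in> {E \<in> S. A \<subset> E \<and> E \<subseteq> C}" using C \<open>A \<subset> C\<close> by simp
  then obtain D where D: "D \<in> {E \<in> S. A \<subset> E \<and> E \<subseteq> C}"
    and D_min: "\<And>E. (E, D) \<in> {(E', E). E \<in> S \<and> E' \<in> S \<and> A \<subseteq> E' \<and> E' \<subset> E} \<Longrightarrow>
                  E \<notin> {E \<in> S. A \<subset> E \<and> E \<subseteq> C}"
    by (rule wfE_min[OF wf_psubset_above[OF A]]) blast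
  have "\<not> E \<subset> D" if "E \<in> S" "A \<subset> E" for E
    using D D_min[of E] that by blast
  with D show thesis using that by blast
qed

abbreviation adjacent :: "'a set set \<Rightarrow> 'a set set \<Rightarrow> bool" where
  "adjacent \<equiv> edge_rel S (cls X S) (\<lambda>A. cls X S (X - A))"

lemma adjacent_cls_compl: "A \<in> S \<Longrightarrow> adjacent (cls X S A) (cls X S (X - A))"
  unfolding edge_rel_def by (rule bexI[of _ A]) simp_all

lemma adjacent_rtranclp_if_subset:
  assumes C: "C \<in> S"
  shows "A \<in> S \<Longrightarrow> A \<subseteq> C \<Longrightarrow> adjacent\<^sup>*\<^sup>* (cls X S A) (cls X S C)"
proof (induction A rule: wf_induct_rule[OF wf_psupset_below[OF C]])
  case (1 A)
  show ?case
  proof (cases "A = C")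
    case False
    then have "A \<subset> C" using 1(3) by blast
    then obtain D where D: "D \<in> S" "A \<subset> D" "D \<subseteq> C"
      and cover: "\<And>E. E \<in> S \<Longrightarrow> A \<subset> E \<Longrightarrow> \<not> E \<subset> D"
      using obtain_cover_below[OF 1(2) C] by blast
    have "adjacent (cls X S (X - D)) (cls X S D)"
      using adjacent_cls_compl[OF compl_mem[OF D(1)]] D(1) by simp
    then have "adjacent (cls X S A) (cls X S D)"
      using cls_eq_cls_compl_if_cover[OF 1(2) D(1,2) cover] by simp
    moreover have "adjacent\<^sup>*\<^sup>* (cls X S D) (cls X S C)"
      by (rule 1(1)) (use 1(2) D in auto)
    ultimately show ?thesis by (rule converse_rtranclp_into_rtranclp)
  qed simp
qed

lemma adjacent_rtranclp:
  assumes A: "A \<in> S" and B: "B \<in> S"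
  shows "adjacent\<^sup>*\<^sup>* (cls X S A) (cls X S B)"
proof -
  have to_compl: "adjacent\<^sup>*\<^sup>* (cls X S E) (cls X S (X - E))" and
    from_compl: "adjacent\<^sup>*\<^sup>* (cls X S (X - E)) (cls X S E)" if "E \<in> S" for E
    using adjacent_cls_compl[OF that] adjacent_cls_compl[OF compl_mem[OF that]] that by auto
  note up = adjacent_rtranclp_if_subset
  have X: "A \<subseteq> X" "B \<subseteq> X" using A B mem_subset by auto
  from nestedD[OF A B] show ?thesis
  proof (elim disjE)
    assume "A \<inter> B = {}"
    then have "A \<subseteq> X - B" using X by blast
    then show ?thesis using up[OF compl_mem[OF B] A] from_compl[OF B] by (blast intro: rtranclp_trans)
  next
    assume "A \<inter> (X - B) = {}"
    then have "A \<subseteq> B" using X by blast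
    then show ?thesis using up[OF B A] by blast
  next
    assume "(X - A) \<inter> B = {}"
    then have "X - A \<subseteq> X - B" using X by blast
    then show ?thesis using up[OF compl_mem[OF B] compl_mem[OF A]] to_compl[OF A] from_compl[OF B]
      by (blast intro: rtranclp_trans)
  next
    assume "(X - A) \<inter> (X - B) = {}"
    then have "X - A \<subseteq> B" using X by blast
    then show ?thesis using up[OF B compl_mem[OF A]] to_compl[OF A] by (blast intro: rtranclp_trans)
  qed
qed

lemma reduced_path_antitone:
  assumes path: "is_path S (cls X S) (\<lambda>A. cls X S (X - A)) es v w"
    and reduced: "reduced_path (\<lambda>A. X - A) es"
  shows "k < length es \<Longrightarrow> es ! k \<subseteq> es ! 0"
proof (induction k)
  case (Suc k)
  have "es ! k \<in> S" using path Suc.prems unfolding is_path_def by auto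
  moreover have "cls X S (X - es ! k) = cls X S (es ! Suc k)" "es ! Suc k \<noteq> X - es ! k"
    using path reduced Suc.prems unfolding is_path_def reduced_path_def by auto
  ultimately have "es ! Suc k \<subset> es ! k" by (rule psubset_if_cls_compl_eq)
  then show ?case using Suc by simp
qed simp

lemma no_reduced_cycle:
  assumes path: "is_path S (cls X S) (\<lambda>A. cls X S (X - A)) es v v"
    and reduced: "reduced_path (\<lambda>A. X - A) es"
  shows False
proof -
  define n where "n = length es - 1"
  have n: "n < length es" and "last es = es ! n" "hd es = es ! 0"
    using path unfolding is_path_def n_def by (auto simp: last_conv_nth hd_conv_nth)
  then have closing: "cls X S (X - es ! n) = cls X S (es ! 0)"
    using path unfolding is_path_def by auto
  have S: "es ! 0 \<in> S" "es ! n \<in> S" using path n unfolding is_path_def by auto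
  have "es ! n \<subseteq> es ! 0" using reduced_path_antitone[OF path reduced n] .
  then show False
    using psubset_if_cls_compl_eq[OF S(2) closing] mem_nonempty[OF S(2)] by blast
qed

lemma T_tree_if_nonempty: "S \<noteq> {} \<Longrightarrow> T_tree X S"
  unfolding serre_tree_def
proof (intro conjI ballI)
  fix A assume "A \<in> S"
  then show "cls X S A \<in> Vert X S" "cls X S (X - A) \<in> Vert X S" "X - A \<in> S" "X - A \<noteq> A"
    "X - (X - A) = A" "cls X S (X - A) = cls X S (X - A)"
    using compl_mem mem_nonempty unfolding Vert_def by auto
next
  fix v w assume "v \<in> Vert X S" "w \<in> Vert X S"
  then obtain A B where "A \<in> S" "B \<in> S" "v = cls X S A" "w = cls X S B"
    unfolding Vert_def by blast
  then show "v = w \<or> (\<exists>es. is_path S (cls X S) (\<lambda>A. cls X S (X - A)) es v w)"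
    using is_path_if_rtranclp_edge_rel[OF adjacent_rtranclp] by simp
next
  show "\<not> (\<exists>es v. is_path S (cls X S) (\<lambda>A. cls X S (X - A)) es v v \<and> reduced_path (\<lambda>A. X - A) es)"
    using no_reduced_cycle by blast
qed (simp add: Vert_def)

lemma eq_if_same_endpoints:
  assumes A: "A \<in> S" and B: "B \<in> S"
    and "cls X S A = cls X S B" and "cls X S (X - A) = cls X S (X - B)"
  shows "A = B"
proof (rule ccontr)
  assume "A \<noteq> B"
  then have "B \<subset> X - A"
    using psubset_if_cls_compl_eq[OF compl_mem[OF A]] assms(3) A by simp
  moreover have "X - B \<subset> A"
    using psubset_if_cls_compl_eq[OF A assms(4)] \<open>A \<noteq> B\<close> A B mem_subset by blast
  ultimately show False using A B mem_subset by blast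
qed

lemma disjoint_if_mem_cls:
  assumes A: "A \<in> S" and "B \<in> cls X S A" and "B \<noteq> A"
  shows "A \<inter> B = {}"
proof -
  have "max_orth X S A B" using assms(2,3) unfolding cls_def by simp
  then show ?thesis unfolding max_orth_iff[OF A] by blast
qed

context
  fixes f :: "'a \<Rightarrow> 'a"
  assumes bij_f: "bij_betw f X X" and image_S: "image f ` S = S"
begin

lemma image_mem: "A \<in> S \<Longrightarrow> f ` A \<in> S"
  using image_S by blast

lemma image_compl: "A \<subseteq> X \<Longrightarrow> f ` (X - A) = X - f ` A"
  using inj_on_image_set_diff[OF bij_betw_imp_inj_on[OF bij_f], of X A] bij_betw_imp_surj_on[OF bij_f]
  by simp

lemma image_subset_iff_subset: "A \<subseteq> X \<Longrightarrow> B \<subseteq> X \<Longrightarrow> f ` A \<subseteq> f ` B \<longleftrightarrow> A \<subseteq> B"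
  using inj_on_image_mem_iff[OF bij_betw_imp_inj_on[OF bij_f]] by blast

lemma image_psubset_iff: "A \<subseteq> X \<Longrightarrow> B \<subseteq> X \<Longrightarrow> f ` A \<subset> f ` B \<longleftrightarrow> A \<subset> B"
  by (simp add: less_le image_subset_iff_subset inj_on_image_eq_iff[OF bij_betw_imp_inj_on[OF bij_f]])

lemma bex_image_S_iff: "(\<exists>C\<in>S. P C) \<longleftrightarrow> (\<exists>C\<in>S. P (f ` C))"
proof -
  have "(\<exists>C\<in>S. P C) \<longleftrightarrow> (\<exists>C\<in>image f ` S. P C)" by (simp only: image_S)
  also have "\<dots> \<longleftrightarrow> (\<exists>C\<in>S. P (f ` C))" by blast
  finally show ?thesis .
qed

lemma max_orth_image_iff:
  assumes A: "A \<in> S" and B: "B \<in> S"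
  shows "max_orth X S (f ` A) (f ` B) \<longleftrightarrow> max_orth X S A B"
proof -
  have X: "A \<subseteq> X" "B \<subseteq> X" "X - A \<subseteq> X" using A B mem_subset by auto
  have psubset_image_iff: "f ` C \<subset> f ` (X - A) \<and> f ` B \<subset> f ` C \<longleftrightarrow> C \<subset> X - A \<and> B \<subset> C"
    if "C \<in> S" for C
    using image_psubset_iff[OF mem_subset[OF that] X(3)] image_psubset_iff[OF X(2) mem_subset[OF that]]
    by (rule arg_cong2[where f = conj])
  have "(\<exists>C\<in>S. C \<subset> f ` (X - A) \<and> f ` B \<subset> C) \<longleftrightarrow> (\<exists>C\<in>S. f ` C \<subset> f ` (X - A) \<and> f ` B \<subset> f ` C)"
    by (rule bex_image_S_iff)
  also have "\<dots> \<longleftrightarrow> (\<exists>C\<in>S. C \<subset> X - A \<and> B \<subset> C)"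
    by (rule bex_cong[OF refl psubset_image_iff])
  finally have competitors: "(\<exists>C\<in>S. C \<subset> X - f ` A \<and> f ` B \<subset> C) \<longleftrightarrow> (\<exists>C\<in>S. C \<subset> X - A \<and> B \<subset> C)"
    unfolding image_compl[OF X(1)] .
  have "f ` B \<subset> X - f ` A \<longleftrightarrow> B \<subset> X - A"
    unfolding image_compl[OF X(1), symmetric] using image_psubset_iff[OF X(2,3)] .
  then show ?thesis
    unfolding max_orth_iff[OF A] max_orth_iff[OF image_mem[OF A]] competitors
    by (simp add: image_mem[OF B] B)
qed

lemma image_S_filter: "{B \<in> S. P B} = image f ` {B \<in> S. P (f ` B)}"
proof -
  have "{B \<in> S. P B} = {B \<in> image f ` S. P B}" by (simp only: image_S)
  also have "\<dots> = image f ` {B \<in> S. P (f ` B)}" by blast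
  finally show ?thesis .
qed

lemma cls_image:
  assumes A: "A \<in> S"
  shows "cls X S (f ` A) = image f ` cls X S A"
proof -
  have "{B \<in> S. max_orth X S (f ` A) B} = image f ` {B \<in> S. max_orth X S (f ` A) (f ` B)}"
    by (rule image_S_filter)
  also have "\<dots> = image f ` {B \<in> S. max_orth X S A B}"
    using max_orth_image_iff[OF A] by (simp cong: conj_cong)
  finally show ?thesis unfolding cls_def by simp
qed

end

end

locale invariant_nested_family = nested_family X S + group_action G X \<phi>
  for X :: "'a set" and S :: "'a set set" and G :: "('g, 'm) monoid_scheme" (structure)
    and \<phi> :: "'g \<Rightarrow> 'a \<Rightarrow> 'a" +
  assumes sact_mem: "g \<in> carrier G \<Longrightarrow> A \<in> S \<Longrightarrow> sact \<phi> g A \<in> S"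
begin

sublocale group G
  using group_hom unfolding group_hom_def by blast

lemma sact_one:
  assumes "A \<subseteq> X"
  shows "sact \<phi> \<one> A = A"
proof -
  have "\<phi> \<one> x = x" if "x \<in> X" for x
    using that id_eq_one by (metis restrict_apply')
  then have "sact \<phi> \<one> A = (\<lambda>x. x) ` A"
    unfolding sact_def using assms by (intro image_cong) auto
  then show ?thesis by simp
qed

lemma sact_mult:
  "g \<in> carrier G \<Longrightarrow> h \<in> carrier G \<Longrightarrow> A \<subseteq> X \<Longrightarrow> sact \<phi> (g \<otimes> h) A = sact \<phi> g (sact \<phi> h A)"
  unfolding sact_def image_image by (intro image_cong) (auto intro: composition_rule)

lemma bij_betw_action: "g \<in> carrier G \<Longrightarrow> bij_betw (\<phi> g) X X"
  using bij_prop0 unfolding Bij_def by simp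

lemma sact_inv_cancel:
  assumes "g \<in> carrier G" and "A \<subseteq> X"
  shows "sact \<phi> g (sact \<phi> (inv g) A) = A"
  using assms by (simp add: sact_mult[symmetric] sact_one)

lemma image_action_S:
  assumes g: "g \<in> carrier G"
  shows "image (\<phi> g) ` S = S"
proof
  show "image (\<phi> g) ` S \<subseteq> S" using sact_mem[OF g] unfolding sact_def by blast
  have "A = \<phi> g ` sact \<phi> (inv g) A" and "sact \<phi> (inv g) A \<in> S" if "A \<in> S" for A
    using sact_inv_cancel[OF g mem_subset[OF that]] sact_mem[OF inv_closed[OF g] that]
    unfolding sact_def by simp_all
  then show "S \<subseteq> image (\<phi> g) ` S" by blast
qed

lemma cls_sact: "g \<in> carrier G \<Longrightarrow> A \<in> S \<Longrightarrow> cls X S (sact \<phi> g A) = vact \<phi> g (cls X S A)"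
  unfolding sact_def vact_def using cls_image[OF bij_betw_action image_action_S] by simp

lemma compl_sact: "g \<in> carrier G \<Longrightarrow> A \<in> S \<Longrightarrow> X - sact \<phi> g A = sact \<phi> g (X - A)"
  unfolding sact_def using image_compl[OF bij_betw_action image_action_S] mem_subset by simp

lemma vact_mem_Vert:
  assumes g: "g \<in> carrier G" and "v \<in> Vert X S"
  shows "vact \<phi> g v \<in> Vert X S"
proof -
  obtain A where A: "A \<in> S" "v = cls X S A" using assms(2) unfolding Vert_def by blast
  then have "vact \<phi> g v = cls X S (sact \<phi> g A)" using cls_sact[OF g] by simp
  with sact_mem[OF g A(1)] show ?thesis unfolding Vert_def by blast
qed

lemma vact_one: "v \<in> Vert X S \<Longrightarrow> vact \<phi> \<one> v = v"
  unfolding Vert_def using cls_sact[OF one_closed, symmetric] sact_one mem_subset by auto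

lemma vact_mult:
  assumes g: "g \<in> carrier G" and h: "h \<in> carrier G" and "v \<in> Vert X S"
  shows "vact \<phi> (g \<otimes> h) v = vact \<phi> g (vact \<phi> h v)"
proof -
  obtain A where A: "A \<in> S" "v = cls X S A" using assms(3) unfolding Vert_def by blast
  have "vact \<phi> (g \<otimes> h) v = cls X S (sact \<phi> g (sact \<phi> h A))"
    using cls_sact[OF m_closed[OF g h] A(1)] sact_mult[OF g h mem_subset[OF A(1)]] A(2) by simp
  also have "\<dots> = vact \<phi> g (vact \<phi> h v)"
    using cls_sact[OF g sact_mem[OF h A(1)]] cls_sact[OF h A(1)] A(2) by simp
  finally show ?thesis .
qed

lemma bij_betw_vact: "g \<in> carrier G \<Longrightarrow> bij_betw (vact \<phi> g) (Vert X S) (Vert X S)"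
  by (rule bij_betw_byWitness[where f' = "vact \<phi> (inv g)"])
    (auto simp: vact_mult[symmetric] vact_one vact_mem_Vert)

lemma bij_betw_sact: "g \<in> carrier G \<Longrightarrow> bij_betw (sact \<phi> g) S S"
  by (rule bij_betw_byWitness[where f' = "sact \<phi> (inv g)"])
    (auto simp: sact_mult[symmetric] sact_one sact_mem mem_subset)

lemma edge_stab_eq_set_stab:
  assumes A: "A \<in> S"
  shows "edge_stab G \<phi> X S A = set_stab G \<phi> A"
proof -
  have "vact \<phi> g (cls X S A) = cls X S A \<and> vact \<phi> g (cls X S (X - A)) = cls X S (X - A)
      \<longleftrightarrow> sact \<phi> g A = A" if g: "g \<in> carrier G" for g
  proof -
    have "vact \<phi> g (cls X S A) = cls X S (sact \<phi> g A)"
      and "vact \<phi> g (cls X S (X - A)) = cls X S (X - sact \<phi> g A)"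
      using cls_sact[OF g] compl_sact[OF g A] A compl_mem by simp_all
    then show ?thesis using eq_if_same_endpoints[OF sact_mem[OF g A] A] by auto
  qed
  then show ?thesis unfolding edge_stab_def set_stab_def by blast
qed

lemma no_fixed_vertex:
  assumes moved: "\<forall>A\<in>S. \<exists>g\<in>carrier G. sact \<phi> g A \<noteq> A \<and> sact \<phi> g A \<inter> A \<noteq> {}"
    and v: "v \<in> Vert X S"
  shows "\<exists>g\<in>carrier G. vact \<phi> g v \<noteq> v"
proof -
  obtain A where A: "A \<in> S" "v = cls X S A" using v unfolding Vert_def by blast
  obtain g where g: "g \<in> carrier G" "sact \<phi> g A \<noteq> A" "sact \<phi> g A \<inter> A \<noteq> {}"
    using moved A(1) by blast
  have "sact \<phi> g A \<notin> cls X S A" using disjoint_if_mem_cls[OF A(1)] g(2,3) by blast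
  then have "cls X S (sact \<phi> g A) \<noteq> cls X S A" unfolding cls_def by blast
  then show ?thesis using g(1) cls_sact[OF g(1) A(1)] A(2) by auto
qed

end

theorem mainTheorem6:
  fixes G :: "('g, 'm) monoid_scheme" and X :: "'a set" and \<phi> :: "'g \<Rightarrow> 'a \<Rightarrow> 'a"
    and S :: "'a set set"
  assumes "group G"
    and "group_action G X \<phi>"
    and "X \<noteq> {}"
    and "S \<noteq> {}"
    and "\<forall>A\<in>S. A \<noteq> {} \<and> A \<subseteq> X"
    and "self_dual X S"
    and "nested X S"
    and "chain_vanishing S"
    and "\<forall>g\<in>carrier G. \<forall>A\<in>S. sact \<phi> g A \<in> S"
  shows "T_tree X S
    \<and> (\<exists>f. inj_on f (Vert X S) \<and> f ` Vert X S \<subseteq> S)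
    \<and> (\<forall>g\<in>carrier G. \<forall>A\<in>S. cls X S (sact \<phi> g A) = vact \<phi> g (cls X S A))
    \<and> (\<forall>v\<in>Vert X S. vact \<phi> \<one>\<^bsub>G\<^esub> v = v)
    \<and> (\<forall>g\<in>carrier G. \<forall>h\<in>carrier G. \<forall>v\<in>Vert X S.
          vact \<phi> (g \<otimes>\<^bsub>G\<^esub> h) v = vact \<phi> g (vact \<phi> h v))
    \<and> (\<forall>g\<in>carrier G. bij_betw (vact \<phi> g) (Vert X S) (Vert X S)
          \<and> bij_betw (sact \<phi> g) S S
          \<and> (\<forall>A\<in>S. cls X S (sact \<phi> g A) = vact \<phi> g (cls X S A)
                 \<and> cls X S (X - sact \<phi> g A) = vact \<phi> g (cls X S (X - A))
                 \<and> X - sact \<phi> g A = sact \<phi> g (X - A)))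
    \<and> {edge_stab G \<phi> X S A | A. A \<in> S} = {set_stab G \<phi> A | A. A \<in> S}
    \<and> ((\<forall>A\<in>S. \<exists>g\<in>carrier G. sact \<phi> g A \<noteq> A \<and> sact \<phi> g A \<inter> A \<noteq> {})
         \<longrightarrow> \<not> (\<exists>v\<in>Vert X S. \<forall>g\<in>carrier G. vact \<phi> g v = v))"
proof -
  interpret invariant_nested_family X S G \<phi>
    using assms(2,5-9)
    by (simp add: invariant_nested_family_def invariant_nested_family_axioms_def nested_family_def)
  have Vert_into_S: "inj_on (inv_into S (cls X S)) (Vert X S) \<and> inv_into S (cls X S) ` Vert X S \<subseteq> S"
    unfolding Vert_def by (simp add: inj_on_inv_into image_subsetI inv_into_into)
  show ?thesis
  proof (intro conjI)
    show "\<exists>f. inj_on f (Vert X S) \<and> f ` Vert X S \<subseteq> S" using Vert_into_S by blast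
    show "{edge_stab G \<phi> X S A | A. A \<in> S} = {set_stab G \<phi> A | A. A \<in> S}"
      using edge_stab_eq_set_stab by blast
    show "(\<forall>A\<in>S. \<exists>g\<in>carrier G. sact \<phi> g A \<noteq> A \<and> sact \<phi> g A \<inter> A \<noteq> {})
         \<longrightarrow> \<not> (\<exists>v\<in>Vert X S. \<forall>g\<in>carrier G. vact \<phi> g v = v)"
      using no_fixed_vertex by blast
  qed (simp_all add: T_tree_if_nonempty[OF assms(4)] cls_sact vact_one vact_mult bij_betw_vact bij_betw_sact
      compl_sact compl_mem)
qed

end
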